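(* Let $(A,E)$ be a $B$-valued Banach noncommutative probability space, $a\in A$, $N\in\mathbb N$, and fix $i\in I$ in the Fock space setting below. Then there exist $\alpha_n\in\mathcal B_n(B)$, $n=0,1,\ldots,N$, such that with $X=L_i+\sum_{n=0}^NV_{i,n}(\alpha_n)\in\mathcal B(\mathcal F)$ one has $\mathcal E(b_0Xb_1X\cdots b_kX)=E(b_0ab_1a\cdots b_ka)$ for all $k\in\{1,\ldots,N\}$ and all $b_0,\ldots,b_k\in B$ (with $b_j$ acting as $\lambda(b_j)$).
   Context: A $B$-valued Banach noncommutative probability space is a pair $(A,E)$ where $A$ is a unital Banach algebra containing an isometric copy of the unital complex Banach algebra $B$ as a unital subalgebra and $E:A\to B$ is a bounded projection with $E(b_1ab_2)=b_1E(a)b_2$. Fock space setting: $I$ a set, $\mathbb N=\{1,2,\ldots\}$; $D=\ell^1(I,B)$ (functions $d:I\to B$ with $\sum_i\|d(i)\|<\infty$, left action $(bd)(i)=b\,d(i)$, $\delta_i$ the function $1$ at $i$, $0$ elsewhere); $\mathcal F=B\Omega\oplus\bigoplus_{k\ge1}D^{\hat\otimes k}\hat\otimes B$ ($\ell^1$-sum of projective tensor products, $\Omega$ the unit of the copy $B\Omega$ of $B$); $\lambda(b)$: $b_0\Omega\mapsto(bb_0)\Omega$, $d_1\otimes\cdots\otimes d_k\otimes b_0\mapsto(bd_1)\otimes\cdots\otimes d_k\otimes b_0$; $P$ the projection onto $B\Omega$ killing other summands, $\mathcal E(X)=P(X\Omega)$; $L_i$: $b_0\Omega\mapsto\delta_i\otimes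 b_0$, $d_1\otimes\cdots\otimes b_0\mapsto\delta_i\otimes d_1\otimes\cdots\otimes b_0$. $\mathcal B_n(B)$ = bounded multilinear maps $B^n\to B$, $\mathcal B_0(B)=B$. For $n\ge1$, $V_{i,n}(\alpha_n)$ vanishes on $B\Omega$ and on $d_1\otimes\cdots\otimes d_k\otimes b_0$ with $k<n$, sends it to $\alpha_n(d_1(i),\ldots,d_n(i))b_0\Omega$ if $k=n$, and to $\alpha_n(d_1(i),\ldots,d_n(i))d_{n+1}\otimes\cdots\otimes d_k\otimes b_0$ if $k>n$. $V_{i,0}(\alpha_0)=\lambda(\alpha_0)$. *)

theory Defs
  imports "HOL-Analysis.Analysis"
begin

text \<open>A complex unital Banach
algebra is modelled as a real unital Banach algebra (type class) together with a
map cs from the complex numbers into it, complex scalar multiplication being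
c . x = cs c * x.\<close>

definition complex_structure :: "(complex \<Rightarrow> 'b::{real_normed_algebra_1,banach}) \<Rightarrow> bool" where
  "complex_structure cs \<longleftrightarrow>
     (\<forall>c d. cs (c + d) = cs c + cs d) \<and>
     (\<forall>c d. cs (c * d) = cs c * cs d) \<and>
     (\<forall>r. cs (complex_of_real r) = of_real r) \<and>
     (\<forall>c x. cs c * x = x * cs c) \<and>
     (\<forall>c x. norm (cs c * x) = cmod c * norm x)"

text \<open>A contains an isometric copy of B as a unital subalgebra via the isometric unital
algebra embedding iota : B \<rightarrow> A (complex linear, i.e. compatible with the complex
structures: the complex structure of A is iota \<circ> cs).\<close>

definition banach_ncps ::
  "(complex \<Rightarrow> 'b::{real_normed_algebra_1,banach}) \<Rightarrow> ('b \<Rightarrow> 'a::{real_normed_algebra_1,banach})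
    \<Rightarrow> ('a \<Rightarrow> 'b) \<Rightarrow> bool" where
  "banach_ncps cs iota E \<longleftrightarrow>
     complex_structure cs \<and>
     complex_structure (iota \<circ> cs) \<and>
     (\<forall>x y. iota (x + y) = iota x + iota y) \<and>
     (\<forall>r x. iota (scaleR r x) = scaleR r (iota x)) \<and>
     (\<forall>x y. iota (x * y) = iota x * iota y) \<and>
     iota 1 = 1 \<and>
     (\<forall>x. norm (iota x) = norm x) \<and>
     bounded_linear E \<and>
     (\<forall>b. E (iota b) = b) \<and>
     (\<forall>b1 a b2. E (iota b1 * a * iota b2) = b1 * E a * b2)"

text \<open>An element of B_n(B) is represented by a function on lists, of which only the
values on lists of length n matter.  For n = 0 it is just the element alpha [] of B.\<close>

definition bounded_multilinear_n ::
  "(complex \<Rightarrow> 'b::{real_normed_algebra_1,banach}) \<Rightarrow> nat \<Rightarrow> ('b list \<Rightarrow> 'b) \<Rightarrow> bool" where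
  "bounded_multilinear_n cs n alpha \<longleftrightarrow>
     (\<forall>xs ys x y. length xs + length ys + 1 = n \<longrightarrow>
        alpha (xs @ (x + y) # ys) = alpha (xs @ x # ys) + alpha (xs @ y # ys)) \<and>
     (\<forall>xs ys c x. length xs + length ys + 1 = n \<longrightarrow>
        alpha (xs @ (cs c * x) # ys) = cs c * alpha (xs @ x # ys)) \<and>
     (\<exists>K. \<forall>xs. length xs = n \<longrightarrow> norm (alpha xs) \<le> K * (\<Prod>x\<leftarrow>xs. norm x))"

definition ell1 :: "('i \<Rightarrow> 'b::real_normed_vector) set" where
  "ell1 = {d. (\<lambda>i. norm (d i)) summable_on UNIV}"

definition delta :: "'i \<Rightarrow> 'i \<Rightarrow> 'b::{zero,one}" where
  "delta i = (\<lambda>j. if j = i then 1 else 0)"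

text \<open>An elementary tensor d_1 \<otimes> ... \<otimes> d_k \<otimes> b_0 is the pair ([d_1,...,d_k], b_0);
the pair ([], b_0) stands for b_0 \<Omega>.  A vector is a formal finite sum (list) of
elementary tensors.  Operators are given by their (linear extension of their) action
on elementary tensors.\<close>

type_synonym ('i,'b) etensor = "('i \<Rightarrow> 'b) list \<times> 'b"
type_synonym ('i,'b) fvec = "('i,'b) etensor list"
type_synonym ('i,'b) fop = "('i,'b) etensor \<Rightarrow> ('i,'b) fvec"

definition apply_op :: "('i,'b) fop \<Rightarrow> ('i,'b) fvec \<Rightarrow> ('i,'b) fvec" where
  "apply_op T v = concat (map T v)"

definition Omega :: "('i,'b::one) fvec" where
  "Omega = [([], 1)]"

fun lam :: "'b::times \<Rightarrow> ('i,'b) fop" where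
  "lam b ([], b0) = [([], b * b0)]"
| "lam b (d # ds, b0) = [((\<lambda>j. b * d j) # ds, b0)]"

definition Lop :: "'i \<Rightarrow> ('i,'b::{zero,one}) fop" where
  "Lop i e = [(delta i # fst e, snd e)]"

text \<open>V_{i,n}(alpha_n); for n = 0 this is lambda(alpha_0) with alpha_0 = alpha [].\<close>
definition Vop :: "'i \<Rightarrow> nat \<Rightarrow> ('b::times list \<Rightarrow> 'b) \<Rightarrow> ('i,'b) fop" where
  "Vop i n alpha e =
     (let ds = fst e; b0 = snd e; c = alpha (map (\<lambda>d. d i) (take n ds)) in
      if length ds < n then []
      else if length ds = n then [([], c * b0)]
      else [((\<lambda>j. c * (ds ! n) j) # drop (Suc n) ds, b0)])"

definition Xop :: "'i \<Rightarrow> nat \<Rightarrow> (nat \<Rightarrow> 'b::{zero,one,times} list \<Rightarrow> 'b) \<Rightarrow> ('i,'b) fop" where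
  "Xop i N alpha e = Lop i e @ concat (map (\<lambda>n. Vop i n (alpha n) e) [0..<Suc N])"

text \<open>P: projection onto B\<Omega> (returns the B-coefficient); \<E>(Y) = P(Y \<Omega>).\<close>
definition Pproj :: "('i,'b::monoid_add) fvec \<Rightarrow> 'b" where
  "Pproj v = sum_list (map (\<lambda>e. if fst e = [] then snd e else 0) v)"

definition fock_word :: "('i,'b::times) fop \<Rightarrow> 'b list \<Rightarrow> ('i,'b) fvec \<Rightarrow> ('i,'b) fvec" where
  "fock_word X bs v = foldr (\<lambda>b w. apply_op (lam b) (apply_op X w)) bs v"

definition fock_moment :: "('i,'b::{monoid_add,one,times}) fop \<Rightarrow> 'b list \<Rightarrow> 'b" where
  "fock_moment X bs = Pproj (fock_word X bs Omega)"

definition alg_word :: "('b \<Rightarrow> 'a::monoid_mult) \<Rightarrow> 'a \<Rightarrow> 'b list \<Rightarrow> 'a" where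
  "alg_word iota a bs = foldr (\<lambda>b y. iota b * a * y) bs 1"

end

theory Submission
  imports Defs
begin

text \<open>L_i, lambda(b) and V_{i,n} act on d_1 \<otimes> ... \<otimes> d_k \<otimes> b_0 through the coordinates
  d_1(i), ..., d_k(i) only (L_i adds the coordinate 1, lambda(b) multiplies the first one by b), and
  P is linear in b_0.  So the moment of b_0 X b_1 X ... b_k X is a scalar recursion over the
  remaining letters and the i-coordinates of the current tensor.  In a word of length n + 1,
  alpha_n can act only at the last letter, after n creations, and there it contributes exactly
  b_0 alpha_n(b_1, ..., b_n); all other terms involve alpha_0, ..., alpha_{n-1} only.  Hence
  alpha_n can be defined recursively as E(a b_1 a ... b_n a) minus the moment computed from the
  earlier coefficients.  The moments are multilinear and bounded in the letters whenever the
  coefficients are, so these properties propagate through the recursion.\<close>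

lemma apply_op_append: "apply_op T (xs @ ys) = apply_op T xs @ apply_op T ys"
  by (simp add: apply_op_def)

lemma apply_op_concat: "apply_op T (concat xss) = concat (map (apply_op T) xss)"
  by (induct xss) (simp_all add: apply_op_def)

lemma apply_op_apply_op: "apply_op T (apply_op S v) = concat (map (\<lambda>e. apply_op T (S e)) v)"
  by (induct v) (simp_all add: apply_op_def)

lemma sum_list_map_concat:
  "sum_list (map h (concat xss)) = sum_list (map (\<lambda>xs. sum_list (map h xs)) xss)"
  by (induct xss) simp_all

lemma sum_list_map_upt_Suc: "sum_list (map f [0..<Suc N]) = (\<Sum>n\<le>N. f n)"
  by (simp add: interv_sum_list_conv_sum_set_nat atLeast0LessThan lessThan_Suc_atMost del: upt_Suc)

text \<open>tensor_moment al N [r_1, ..., r_m] gs is P of lambda(r_m) X ... lambda(r_1) X applied to a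
  tensor with i-coordinates gs and coefficient 1 (lemma Pproj_fock_word).  If F is this
  functional for the remaining letters, annihilation_term F (al n) n b gs is the contribution of
  lambda(b) V_{i,n}(al n); the creation part lambda(b) L_i just pushes b onto gs.\<close>

definition annihilation_term ::
  "('b list \<Rightarrow> 'b) \<Rightarrow> ('b list \<Rightarrow> 'b) \<Rightarrow> nat \<Rightarrow> 'b \<Rightarrow> 'b list \<Rightarrow> 'b::ring_1" where
  "annihilation_term F \<alpha> n b gs =
    (if length gs < n then 0
     else if length gs = n then F [] * (b * \<alpha> gs)
     else F ((b * (\<alpha> (take n gs) * gs ! n)) # drop (Suc n) gs))"

primrec tensor_moment :: "(nat \<Rightarrow> 'b list \<Rightarrow> 'b) \<Rightarrow> nat \<Rightarrow> 'b::ring_1 list \<Rightarrow> 'b list \<Rightarrow> 'b" where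
  "tensor_moment al N [] gs = (if gs = [] then 1 else 0)"
| "tensor_moment al N (b # rs) gs = tensor_moment al N rs (b # gs) +
     (\<Sum>n\<le>N. annihilation_term (tensor_moment al N rs) (al n) n b gs)"

lemma tensor_moment_step:
  "sum_list (map (\<lambda>(ds, c). tensor_moment al N rs (map (\<lambda>d. d i) ds) * c)
      (apply_op (lam b) (Xop i N al (ds, c))))
   = tensor_moment al N (b # rs) (map (\<lambda>d. d i) ds) * c"
proof -
  let ?w = "\<lambda>(ds, c). tensor_moment al N rs (map (\<lambda>d. d i) ds) * c"
  have V: "sum_list (map ?w (apply_op (lam b) (Vop i n (al n) (ds, c)))) =
      annihilation_term (tensor_moment al N rs) (al n) n b (map (\<lambda>d. d i) ds) * c" for n
    by (auto simp: Vop_def Let_def apply_op_def annihilation_term_def take_map drop_map mult.assoc)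
  have "apply_op (lam b) (Lop i (ds, c)) = [((\<lambda>j. b * delta i j) # ds, c)]"
    by (simp add: Lop_def apply_op_def)
  then have "apply_op (lam b) (Xop i N al (ds, c)) = [((\<lambda>j. b * delta i j) # ds, c)] @
      concat (map (\<lambda>n. apply_op (lam b) (Vop i n (al n) (ds, c))) [0..<Suc N])"
    by (simp add: Xop_def apply_op_append apply_op_concat o_def del: upt_Suc)
  then show ?thesis
    by (simp add: sum_list_map_concat V sum_list_map_upt_Suc delta_def o_def
        sum_distrib_right distrib_right del: upt_Suc)
qed

lemma Pproj_fock_word:
  "Pproj (fock_word (Xop i N al) bs v) =
     sum_list (map (\<lambda>(ds, c). tensor_moment al N (rev bs) (map (\<lambda>d. d i) ds) * c) v)"
proof (induct bs arbitrary: v rule: rev_induct)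
  case Nil
  show ?case by (induct v) (auto simp: fock_word_def Pproj_def)
next
  case (snoc b bs)
  let ?w = "\<lambda>(ds, c). tensor_moment al N (rev bs) (map (\<lambda>d. d i) ds) * c"
  have "Pproj (fock_word (Xop i N al) (bs @ [b]) v) =
      Pproj (fock_word (Xop i N al) bs (concat (map (\<lambda>e. apply_op (lam b) (Xop i N al e)) v)))"
    by (simp add: fock_word_def apply_op_apply_op)
  also have "\<dots> = sum_list (map (\<lambda>e. sum_list (map ?w (apply_op (lam b) (Xop i N al e)))) v)"
    by (simp add: snoc sum_list_map_concat o_def)
  also have "\<dots> =
      sum_list (map (\<lambda>(ds, c). tensor_moment al N (rev (bs @ [b])) (map (\<lambda>d. d i) ds) * c) v)"
    by (intro arg_cong[where f = sum_list] map_cong)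
      (auto simp: tensor_moment_step simp del: tensor_moment.simps)
  finally show ?case .
qed

lemma fock_moment_eq_tensor_moment: "fock_moment (Xop i N al) bs = tensor_moment al N (rev bs) []"
  by (simp add: fock_moment_def Pproj_fock_word Omega_def)

lemma annihilation_term_mult_left:
  "annihilation_term (\<lambda>hs. c * F hs) \<alpha> n b gs = c * annihilation_term F \<alpha> n b gs"
  by (simp add: annihilation_term_def mult.assoc)

lemma annihilation_term_cong:
  assumes "\<And>hs. length hs \<le> length gs \<Longrightarrow> F hs = G hs" and "n \<le> length gs \<Longrightarrow> \<alpha> = \<beta>"
  shows "annihilation_term F \<alpha> n b gs = annihilation_term G \<beta> n b gs"
  using assms by (simp add: annihilation_term_def)

lemma tensor_moment_singleton:
  "tensor_moment al N [b] gs = (if length gs \<le> N then b * al (length gs) gs else 0)"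
proof -
  have "annihilation_term (tensor_moment al N []) (al n) n b gs =
      (if n = length gs then b * al (length gs) gs else 0)" for n
    by (simp add: annihilation_term_def)
  then show ?thesis by (simp add: sum.delta)
qed

lemma tensor_moment_snoc:
  "tensor_moment al N (rs @ [b]) gs = b * tensor_moment al N (rs @ [1]) gs"
proof (induct rs arbitrary: gs)
  case Nil
  show ?case by (simp add: tensor_moment_singleton del: tensor_moment.simps)
next
  case (Cons r rs)
  have "tensor_moment al N (rs @ [b]) = (\<lambda>hs. b * tensor_moment al N (rs @ [1]) hs)"
    using Cons by blast
  then show ?case
    by (simp add: Cons annihilation_term_mult_left distrib_left sum_distrib_left)
qed

lemma tensor_moment_cong:
  "(\<And>j. j < length rs + length gs \<Longrightarrow> al j = be j) \<Longrightarrow>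
   tensor_moment al N rs gs = tensor_moment be N rs gs"
proof (induct rs arbitrary: gs)
  case Nil
  show ?case by simp
next
  case (Cons b rs)
  have "tensor_moment al N rs hs = tensor_moment be N rs hs" if "length hs \<le> Suc (length gs)" for hs
    using Cons that by simp
  moreover have "al n = be n" if "n \<le> length gs" for n
    using Cons.prems that by simp
  ultimately show ?case
    by (auto intro!: sum.cong annihilation_term_cong)
qed

text \<open>al m can only act on a tensor of length m, which in a word of total length m + 1 exists
  only at the last letter, after creations alone.\<close>

lemma tensor_moment_top_coeff:
  assumes "m \<le> N" "rs \<noteq> []" "length rs + length gs = Suc m"
  shows "tensor_moment al N rs gs =
    tensor_moment (al(m := (\<lambda>_. 0))) N rs gs + last rs * al m (rev (butlast rs) @ gs)"
  using assms
proof (induct rs arbitrary: gs)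
  case Nil
  then show ?case by simp
next
  case (Cons b rs)
  let ?be = "al(m := (\<lambda>_. 0))"
  show ?case
  proof (cases "rs = []")
    case True
    then show ?thesis
      using Cons.prems by (simp add: tensor_moment_singleton del: tensor_moment.simps)
  next
    case False
    have first: "tensor_moment al N rs (b # gs) =
        tensor_moment ?be N rs (b # gs) + last rs * al m (rev (butlast rs) @ b # gs)"
      by (rule Cons.hyps) (use Cons.prems False in auto)
    have "annihilation_term (tensor_moment al N rs) (al n) n b gs =
        annihilation_term (tensor_moment ?be N rs) (?be n) n b gs" for n
      using Cons.prems False
      by (intro annihilation_term_cong tensor_moment_cong) (auto simp: neq_Nil_conv)
    then show ?thesis
      using False by (simp add: first add_ac del: fun_upd_apply)
  qed
qed

definition moment_map :: "(nat \<Rightarrow> 'b list \<Rightarrow> 'b) \<Rightarrow> nat \<Rightarrow> 'b::ring_1 list \<Rightarrow> 'b" where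
  "moment_map al N bs = tensor_moment al N (rev bs @ [1]) []"

lemma fock_moment_Cons: "fock_moment (Xop i N al) (b # bs) = b * moment_map al N bs"
  unfolding fock_moment_eq_tensor_moment moment_map_def rev.simps(2) by (rule tensor_moment_snoc)

lemma moment_map_cong:
  "(\<And>j. j \<le> length bs \<Longrightarrow> al j = be j) \<Longrightarrow> moment_map al N bs = moment_map be N bs"
  unfolding moment_map_def by (rule tensor_moment_cong) auto

lemma moment_map_top_coeff:
  "length bs \<le> N \<Longrightarrow>
   moment_map al N bs = moment_map (al(length bs := (\<lambda>_. 0))) N bs + al (length bs) bs"
  unfolding moment_map_def by (subst tensor_moment_top_coeff) auto

definition cs_linear :: "(complex \<Rightarrow> 'b::ring_1) \<Rightarrow> ('b \<Rightarrow> 'b) \<Rightarrow> bool" where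
  "cs_linear cs g \<longleftrightarrow> (\<forall>x y. g (x + y) = g x + g y) \<and> (\<forall>c x. g (cs c * x) = cs c * g x)"

definition slot_linear :: "(complex \<Rightarrow> 'b::ring_1) \<Rightarrow> nat \<Rightarrow> ('b list \<Rightarrow> 'b) \<Rightarrow> bool" where
  "slot_linear cs n f \<longleftrightarrow> (\<forall>zs p. length zs = n \<longrightarrow> p < n \<longrightarrow> cs_linear cs (\<lambda>x. f (zs[p := x])))"

lemma cs_linear_ident: "cs_linear cs (\<lambda>x. x)"
  by (simp add: cs_linear_def)

lemma cs_linear_zero: "cs_linear cs (\<lambda>x. 0)"
  by (simp add: cs_linear_def)

lemma cs_linear_add: "cs_linear cs f \<Longrightarrow> cs_linear cs g \<Longrightarrow> cs_linear cs (\<lambda>x. f x + g x)"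
  by (simp add: cs_linear_def algebra_simps)

lemma cs_linear_diff: "cs_linear cs f \<Longrightarrow> cs_linear cs g \<Longrightarrow> cs_linear cs (\<lambda>x. f x - g x)"
  by (simp add: cs_linear_def algebra_simps)

lemma cs_linear_mult_right: "cs_linear cs f \<Longrightarrow> cs_linear cs (\<lambda>x. f x * r)"
  by (simp add: cs_linear_def algebra_simps)

lemma cs_linear_mult_left:
  "(\<And>c x. cs c * x = x * cs c) \<Longrightarrow> cs_linear cs f \<Longrightarrow> cs_linear cs (\<lambda>x. r * f x)"
  by (simp add: cs_linear_def algebra_simps)

lemma cs_linear_compose: "cs_linear cs f \<Longrightarrow> cs_linear cs g \<Longrightarrow> cs_linear cs (\<lambda>x. f (g x))"
  by (simp add: cs_linear_def)

lemma cs_linear_sum: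
  "(\<And>n. n \<in> S \<Longrightarrow> cs_linear cs (f n)) \<Longrightarrow> cs_linear cs (\<lambda>x. \<Sum>n\<in>S. f n x)"
  by (cases "finite S") (simp_all add: cs_linear_def sum.distrib sum_distrib_left)

lemma slot_linear_zero: "slot_linear cs n (\<lambda>_. 0)"
  by (simp add: slot_linear_def cs_linear_zero)

lemma slot_linear_diff:
  "slot_linear cs n f \<Longrightarrow> slot_linear cs n g \<Longrightarrow> slot_linear cs n (\<lambda>zs. f zs - g zs)"
  by (simp add: slot_linear_def cs_linear_diff)

lemma cs_linear_annihilation_term_letter:
  assumes central: "\<And>c x. cs c * x = x * cs c" and F: "\<And>D. cs_linear cs (\<lambda>y. F (y # D))"
  shows "cs_linear cs (\<lambda>b. annihilation_term F \<alpha> n b gs)"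
  unfolding annihilation_term_def
  by (cases "length gs < n"; cases "length gs = n")
    (simp_all add: cs_linear_zero cs_linear_mult_left[OF central] cs_linear_mult_right
      cs_linear_ident cs_linear_compose[OF F])

lemma cs_linear_annihilation_term_fun:
  assumes "\<And>hs. cs_linear cs (\<lambda>x. F x hs)"
  shows "cs_linear cs (\<lambda>x. annihilation_term (F x) \<alpha> n b gs)"
  unfolding annihilation_term_def
  by (cases "length gs < n"; cases "length gs = n")
    (simp_all add: cs_linear_zero cs_linear_mult_right assms)

lemma cs_linear_annihilation_term_coord:
  assumes central: "\<And>c x. cs c * x = x * cs c" and \<alpha>: "slot_linear cs n \<alpha>"
    and F: "\<And>hs p. p < length hs \<Longrightarrow> cs_linear cs (\<lambda>x. F (hs[p := x]))"
    and q: "q < length gs"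
  shows "cs_linear cs (\<lambda>x. annihilation_term F \<alpha> n b (gs[q := x]))"
proof -
  have F_head: "cs_linear cs (\<lambda>y. F (y # D))" for D
    using F[of 0 "0 # D"] by simp
  have \<alpha>_slot: "cs_linear cs (\<lambda>x. \<alpha> (zs[p := x]))" if "length zs = n" "p < n" for zs p
    using \<alpha> that by (simp add: slot_linear_def)
  consider "length gs < n" | "length gs = n" | "n < length gs" "q < n" | "n < length gs" "q = n"
    | "n < length gs" "n < q"
    by linarith
  then show ?thesis
  proof cases
    case 1
    then show ?thesis by (simp add: annihilation_term_def cs_linear_zero)
  next
    case 2
    then show ?thesis
      using q by (simp add: annihilation_term_def cs_linear_mult_left[OF central] \<alpha>_slot)
  next
    case 3
    then show ?thesis
      by (simp add: annihilation_term_def take_update_swap cs_linear_mult_left[OF central]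
          cs_linear_mult_right \<alpha>_slot cs_linear_compose[OF F_head])
  next
    case 4
    then show ?thesis
      by (simp add: annihilation_term_def cs_linear_mult_left[OF central] cs_linear_ident
          cs_linear_compose[OF F_head])
  next
    case 5
    have "cs_linear cs
        (\<lambda>x. F (((b * (\<alpha> (take n gs) * gs ! n)) # drop (Suc n) gs)[Suc (q - Suc n) := x]))"
      using 5 q by (intro F) simp
    then show ?thesis
      using 5 by (simp add: annihilation_term_def drop_update_swap)
  qed
qed

lemma tensor_moment_cs_linear_coord:
  assumes central: "\<And>c x. cs c * x = x * cs c" and al: "\<And>n. n \<le> N \<Longrightarrow> slot_linear cs n (al n)"
  shows "q < length gs \<Longrightarrow> cs_linear cs (\<lambda>x. tensor_moment al N rs (gs[q := x]))"
proof (induct rs arbitrary: gs q)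
  case Nil
  then show ?case by (auto simp: cs_linear_zero)
next
  case (Cons b rs)
  have "cs_linear cs (\<lambda>x. tensor_moment al N rs ((b # gs)[Suc q := x]))"
    using Cons.prems by (intro Cons.hyps) simp
  then show ?case
    unfolding tensor_moment.simps
    by (intro cs_linear_add cs_linear_sum cs_linear_annihilation_term_coord[OF central al]
        Cons.hyps) (use Cons.prems in auto)
qed

lemma tensor_moment_cs_linear_letter:
  assumes central: "\<And>c x. cs c * x = x * cs c" and al: "\<And>n. n \<le> N \<Longrightarrow> slot_linear cs n (al n)"
  shows "p < length rs \<Longrightarrow> cs_linear cs (\<lambda>x. tensor_moment al N (rs[p := x]) gs)"
proof (induct rs arbitrary: gs p)
  case Nil
  then show ?case by simp
next
  case (Cons b rs)
  show ?case
  proof (cases p)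
    case 0
    have "cs_linear cs (\<lambda>y. tensor_moment al N rs (y # D))" for D
      using tensor_moment_cs_linear_coord[OF central al, where q = 0 and gs = "0 # D"] by simp
    then show ?thesis
      using 0
      by (simp add: cs_linear_add cs_linear_sum cs_linear_annihilation_term_letter[OF central])
  next
    case (Suc p')
    then show ?thesis
      using Cons by (simp add: cs_linear_add cs_linear_sum cs_linear_annihilation_term_fun)
  qed
qed

lemma moment_map_slot_linear:
  assumes "\<And>c x. cs c * x = x * cs c" and "\<And>n. n \<le> N \<Longrightarrow> slot_linear cs n (al n)"
  shows "slot_linear cs m (moment_map al N)"
  unfolding slot_linear_def
proof (intro allI impI)
  fix zs :: "'a list" and p
  assume zs: "length zs = m" and p: "p < m"
  have "rev (zs[p := x]) @ [1] = (rev zs @ [1])[m - p - 1 := x]" for x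
    using zs p by (simp add: rev_update list_update_append1)
  moreover have "cs_linear cs (\<lambda>x. tensor_moment al N ((rev zs @ [1])[m - p - 1 := x]) [])"
    using zs p by (intro tensor_moment_cs_linear_letter[OF assms]) auto
  ultimately show "cs_linear cs (\<lambda>x. moment_map al N (zs[p := x]))"
    by (simp add: moment_map_def)
qed

abbreviation norm_prod :: "'a::real_normed_vector list \<Rightarrow> real" where
  "norm_prod xs \<equiv> prod_list (map norm xs)"

definition norm_bounded ::
  "nat \<Rightarrow> ('a::real_normed_vector list \<Rightarrow> 'b::real_normed_vector) \<Rightarrow> bool" where
  "norm_bounded n f \<longleftrightarrow> (\<exists>K\<ge>0. \<forall>zs. length zs = n \<longrightarrow> norm (f zs) \<le> K * norm_prod zs)"

lemma norm_prod_nonneg: "0 \<le> norm_prod xs"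
  by (rule prod_list_nonneg) auto

lemma norm_prod_take_nth_drop:
  "n < length gs \<Longrightarrow>
   norm_prod (take n gs) * norm (gs ! n) * norm_prod (drop (Suc n) gs) = norm_prod gs"
  by (subst (4) id_take_nth_drop[of n gs]) (simp_all add: mult.assoc)

lemma norm_bounded_zero: "norm_bounded n (\<lambda>_. 0)"
  by (auto simp: norm_bounded_def)

lemma norm_bounded_diff:
  assumes "norm_bounded n f" "norm_bounded n g"
  shows "norm_bounded n (\<lambda>zs. f zs - g zs)"
proof -
  obtain K L where "K \<ge> 0" "L \<ge> 0"
    and K: "\<And>zs. length zs = n \<Longrightarrow> norm (f zs) \<le> K * norm_prod zs"
    and L: "\<And>zs. length zs = n \<Longrightarrow> norm (g zs) \<le> L * norm_prod zs"
    using assms by (auto simp: norm_bounded_def)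
  have "norm (f zs - g zs) \<le> (K + L) * norm_prod zs" if "length zs = n" for zs
    using norm_triangle_ineq4[of "f zs" "g zs"] K[OF that] L[OF that] by (simp add: distrib_right)
  with \<open>K \<ge> 0\<close> \<open>L \<ge> 0\<close> show ?thesis
    unfolding norm_bounded_def by (intro exI[of _ "K + L"]) auto
qed

lemma norm_bounded_uniform:
  assumes "\<And>n. n \<le> N \<Longrightarrow> norm_bounded n (f n)"
  obtains A where "0 \<le> A" "\<And>n zs. n \<le> N \<Longrightarrow> length zs = n \<Longrightarrow> norm (f n zs) \<le> A * norm_prod zs"
proof -
  obtain K where K0: "\<And>n. n \<le> N \<Longrightarrow> 0 \<le> K n"
    and K: "\<And>n zs. n \<le> N \<Longrightarrow> length zs = n \<Longrightarrow> norm (f n zs) \<le> K n * norm_prod zs"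
    using assms unfolding norm_bounded_def by metis
  show ?thesis
  proof (rule that)
    show "0 \<le> (\<Sum>j\<le>N. K j)"
      using K0 by (intro sum_nonneg) auto
    fix n and zs :: "'a list"
    assume "n \<le> N" "length zs = n"
    then have "norm (f n zs) \<le> K n * norm_prod zs"
      by (rule K)
    also have "\<dots> \<le> (\<Sum>j\<le>N. K j) * norm_prod zs"
      using \<open>n \<le> N\<close> K0 by (intro mult_right_mono member_le_sum norm_prod_nonneg) auto
    finally show "norm (f n zs) \<le> (\<Sum>j\<le>N. K j) * norm_prod zs" .
  qed
qed

lemma norm_annihilation_term_le:
  fixes F :: "'b::real_normed_algebra_1 list \<Rightarrow> 'b"
  assumes F: "\<And>hs. norm (F hs) \<le> C * norm_prod hs"
    and \<alpha>: "\<And>zs. length zs = n \<Longrightarrow> norm (\<alpha> zs) \<le> A * norm_prod zs" and "0 \<le> A"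
  shows "norm (annihilation_term F \<alpha> n b gs) \<le> C * A * (norm b * norm_prod gs)"
proof -
  have "0 \<le> C"
    using order_trans[OF norm_ge_zero F[of "[]"]] by simp
  consider "length gs < n" | "length gs = n" | "n < length gs"
    by linarith
  then show ?thesis
  proof cases
    case 1
    then show ?thesis
      using \<open>0 \<le> C\<close> \<open>0 \<le> A\<close> by (simp add: annihilation_term_def norm_prod_nonneg)
  next
    case 2
    have "norm (F [] * (b * \<alpha> gs)) \<le> norm (F []) * (norm b * norm (\<alpha> gs))"
      by (rule order_trans[OF norm_mult_ineq mult_left_mono[OF norm_mult_ineq norm_ge_zero]])
    also have "\<dots> \<le> C * (norm b * (A * norm_prod gs))"
      using F[of "[]"] \<alpha>[OF 2] \<open>0 \<le> C\<close>
      by (intro mult_mono mult_left_mono) (auto simp: norm_prod_nonneg)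
    finally show ?thesis
      using 2 by (simp add: annihilation_term_def mult_ac)
  next
    case 3
    let ?e = "b * (\<alpha> (take n gs) * gs ! n)"
    have "norm ?e \<le> norm b * (norm (\<alpha> (take n gs)) * norm (gs ! n))"
      by (rule order_trans[OF norm_mult_ineq mult_left_mono[OF norm_mult_ineq norm_ge_zero]])
    also have "\<dots> \<le> norm b * (A * norm_prod (take n gs) * norm (gs ! n))"
      using \<alpha>[of "take n gs"] 3 by (intro mult_left_mono mult_right_mono) auto
    finally have e: "norm ?e \<le> \<dots>" .
    have "norm (F (?e # drop (Suc n) gs)) \<le> C * (norm ?e * norm_prod (drop (Suc n) gs))"
      using F[of "?e # drop (Suc n) gs"] by simp
    also have "\<dots> \<le>
        C * (norm b * (A * norm_prod (take n gs) * norm (gs ! n)) * norm_prod (drop (Suc n) gs))"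
      using e \<open>0 \<le> C\<close> by (intro mult_left_mono mult_right_mono norm_prod_nonneg)
    also have "\<dots> = C * A * (norm b * norm_prod gs)"
      using norm_prod_take_nth_drop[OF 3] by (simp add: mult_ac)
    finally show ?thesis
      using 3 by (simp add: annihilation_term_def)
  qed
qed

lemma tensor_moment_norm_le:
  fixes al :: "nat \<Rightarrow> 'b::real_normed_algebra_1 list \<Rightarrow> 'b" and A :: real
  assumes "0 \<le> A" and al: "\<And>n zs. n \<le> N \<Longrightarrow> length zs = n \<Longrightarrow> norm (al n zs) \<le> A * norm_prod zs"
  shows "norm (tensor_moment al N rs gs) \<le>
    (1 + real (Suc N) * A) ^ length rs * (norm_prod rs * norm_prod gs)"
proof (induct rs arbitrary: gs)
  case Nil
  then show ?case by (simp add: norm_prod_nonneg)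
next
  case (Cons b rs)
  define C where "C = (1 + real (Suc N) * A) ^ length rs * norm_prod rs"
  have IH: "norm (tensor_moment al N rs hs) \<le> C * norm_prod hs" for hs
    using Cons by (simp add: C_def mult.assoc)
  have "norm (tensor_moment al N (b # rs) gs) \<le>
      norm (tensor_moment al N rs (b # gs)) +
      (\<Sum>n\<le>N. norm (annihilation_term (tensor_moment al N rs) (al n) n b gs))"
    by (simp add: order_trans[OF norm_triangle_ineq add_left_mono[OF norm_sum]])
  also have "\<dots> \<le> C * (norm b * norm_prod gs) + (\<Sum>n\<le>N. C * A * (norm b * norm_prod gs))"
    using IH[of "b # gs"] \<open>0 \<le> A\<close>
    by (intro add_mono sum_mono norm_annihilation_term_le[OF IH al]) simp_all
  also have "\<dots> = C * (1 + real (Suc N) * A) * (norm b * norm_prod gs)"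
    by (simp add: distrib_left distrib_right mult.assoc)
  also have "\<dots> = (1 + real (Suc N) * A) ^ length (b # rs) * (norm_prod (b # rs) * norm_prod gs)"
    by (simp add: C_def mult_ac)
  finally show ?case .
qed

lemma moment_map_norm_bounded:
  fixes al :: "nat \<Rightarrow> 'b::real_normed_algebra_1 list \<Rightarrow> 'b"
  assumes "\<And>n. n \<le> N \<Longrightarrow> norm_bounded n (al n)"
  shows "norm_bounded m (moment_map al N)"
proof -
  obtain A where A0: "0 \<le> A"
    and A: "\<And>n zs. n \<le> N \<Longrightarrow> length zs = n \<Longrightarrow> norm (al n zs) \<le> A * norm_prod zs"
    using norm_bounded_uniform assms by metis
  have "norm (moment_map al N zs) \<le> (1 + real (Suc N) * A) ^ Suc m * norm_prod zs"
    if "length zs = m" for zs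
    using tensor_moment_norm_le[OF A0 A, where rs = "rev zs @ [1]" and gs = "[]"] that
    by (simp add: moment_map_def rev_map[symmetric] prod_list.rev)
  with A0 show ?thesis
    unfolding norm_bounded_def by (intro exI[of _ "(1 + real (Suc N) * A) ^ Suc m"]) simp
qed

lemma bounded_multilinear_nI:
  assumes "slot_linear cs n f" "norm_bounded n f"
  shows "bounded_multilinear_n cs n f"
proof -
  have slot: "cs_linear cs (\<lambda>x. f (zs[p := x]))" if "length zs = n" "p < n" for zs p
    using assms(1) that unfolding slot_linear_def by blast
  have "cs_linear cs (\<lambda>x. f (xs @ x # ys))" if "length xs + length ys + 1 = n" for xs ys
    using slot[of "xs @ 0 # ys" "length xs"] that by (simp add: list_update_length)
  then show ?thesis
    using assms(2) by (auto simp: bounded_multilinear_n_def cs_linear_def norm_bounded_def)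
qed

lemma banach_ncps_E_mult_left:
  assumes "banach_ncps cs iota E"
  shows "E (iota b * y) = b * E y"
proof -
  have "E (iota b * y * iota 1) = b * E y * 1" "iota 1 = 1"
    using assms unfolding banach_ncps_def by blast+
  then show ?thesis
    by simp
qed

lemma banach_ncps_scalars_central:
  assumes "banach_ncps cs iota E"
  shows "cs c * x = x * cs c" and "iota (cs c) * y = y * iota (cs c)"
proof -
  have "complex_structure cs" "complex_structure (iota \<circ> cs)"
    using assms by (simp_all add: banach_ncps_def)
  then show "cs c * x = x * cs c" "iota (cs c) * y = y * iota (cs c)"
    unfolding complex_structure_def comp_def by blast+
qed

lemma alg_word_Cons: "alg_word iota a (b # bs) = iota b * a * alg_word iota a bs"
  by (simp add: alg_word_def)

lemma alg_word_append: "alg_word iota a (xs @ ys) = alg_word iota a xs * alg_word iota a ys"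
  by (induct xs) (simp_all add: alg_word_Cons mult.assoc, simp add: alg_word_def)

lemma banach_ncps_E_word_slot_linear:
  fixes iota :: "'b::{real_normed_algebra_1,banach} \<Rightarrow> 'a::{real_normed_algebra_1,banach}"
  assumes B: "banach_ncps cs iota E"
  shows "slot_linear cs m (\<lambda>bs. E (a * alg_word iota a bs))"
  unfolding slot_linear_def
proof (intro allI impI)
  fix zs :: "'b list" and p
  assume "length zs = m" "p < m"
  define L where "L = a * alg_word iota a (take p zs)"
  define R where "R = a * alg_word iota a (drop (Suc p) zs)"
  have word: "a * alg_word iota a (zs[p := x]) = L * iota x * R" for x
    using \<open>length zs = m\<close> \<open>p < m\<close>
    by (simp add: upd_conv_take_nth_drop alg_word_append alg_word_Cons L_def R_def mult.assoc)
  have add: "iota (x + y) = iota x + iota y" and "linear E" for x y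
    using B unfolding banach_ncps_def by (auto intro: bounded_linear.linear)
  have scalar: "L * iota (cs c * x) * R = iota (cs c) * (L * iota x * R)" for c x
  proof -
    have "iota (cs c * x) = iota (cs c) * iota x"
      using B unfolding banach_ncps_def by blast
    moreover have "L * iota (cs c) = iota (cs c) * L"
      using banach_ncps_scalars_central(2)[OF B] by simp
    ultimately show ?thesis
      by (simp only: mult.assoc[symmetric])
  qed
  show "cs_linear cs (\<lambda>x. E (a * alg_word iota a (zs[p := x])))"
    unfolding cs_linear_def word scalar banach_ncps_E_mult_left[OF B]
    by (simp add: add distrib_left distrib_right linear_add[OF \<open>linear E\<close>])
qed

lemma banach_ncps_E_word_norm_bounded:
  fixes iota :: "'b::{real_normed_algebra_1,banach} \<Rightarrow> 'a::{real_normed_algebra_1,banach}"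
  assumes B: "banach_ncps cs iota E"
  shows "norm_bounded m (\<lambda>bs. E (a * alg_word iota a bs))"
proof -
  obtain K where "K > 0" and K: "\<And>x. norm (E x) \<le> norm x * K"
    using B bounded_linear.pos_bounded[of E] unfolding banach_ncps_def by blast
  have iota_norm: "norm (iota x) = norm x" for x
    using B unfolding banach_ncps_def by blast
  have word: "norm (alg_word iota a zs) \<le> norm a ^ length zs * norm_prod zs" for zs
  proof (induct zs)
    case Nil
    then show ?case by (simp add: alg_word_def)
  next
    case (Cons z zs)
    have "norm (alg_word iota a (z # zs)) \<le> norm z * norm a * norm (alg_word iota a zs)"
      unfolding alg_word_Cons iota_norm[symmetric]
      by (rule order_trans[OF norm_mult_ineq mult_right_mono[OF norm_mult_ineq norm_ge_zero]])
    also have "\<dots> \<le> norm z * norm a * (norm a ^ length zs * norm_prod zs)"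
      by (intro mult_left_mono Cons) simp
    finally show ?case
      by (simp add: mult_ac)
  qed
  have "norm (E (a * alg_word iota a zs)) \<le> K * norm a ^ Suc m * norm_prod zs"
    if "length zs = m" for zs
  proof -
    have "norm (E (a * alg_word iota a zs)) \<le> norm (a * alg_word iota a zs) * K"
      by (rule K)
    also have "\<dots> \<le> norm a * (norm a ^ m * norm_prod zs) * K"
      using word[of zs] that \<open>K > 0\<close>
      by (intro mult_right_mono order_trans[OF norm_mult_ineq] mult_left_mono) auto
    finally show ?thesis
      by (simp add: mult_ac)
  qed
  with \<open>K > 0\<close> show ?thesis
    unfolding norm_bounded_def by (intro exI[of _ "K * norm a ^ Suc m"]) simp
qed

text \<open>Coefficient m corrects the moments of length m, on which it acts only additively
  (moment_map_top_coeff).\<close>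

primrec fitted_coeffs :: "('b list \<Rightarrow> 'b) \<Rightarrow> nat \<Rightarrow> nat \<Rightarrow> nat \<Rightarrow> 'b::ring_1 list \<Rightarrow> 'b" where
  "fitted_coeffs t N 0 = (\<lambda>_ _. 0)"
| "fitted_coeffs t N (Suc m) =
    (fitted_coeffs t N m)(m := (\<lambda>bs. t bs - moment_map (fitted_coeffs t N m) N bs))"

lemma fitted_coeffs_eq:
  "fitted_coeffs t N M j = (if j < M then fitted_coeffs t N (Suc j) j else (\<lambda>_. 0))"
  by (induct M) (auto simp: less_Suc_eq)

lemma moment_map_fitted_coeffs:
  assumes "length bs \<le> N" "length bs < M"
  shows "moment_map (fitted_coeffs t N M) N bs = t bs"
proof -
  let ?m = "length bs" and ?F = "fitted_coeffs t N"
  have "?F M j = ?F (Suc ?m) j" if "j \<le> ?m" for j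
    using that assms(2)
    by (simp only: fitted_coeffs_eq[of t N M j] fitted_coeffs_eq[of t N "Suc ?m" j]) simp
  then have "moment_map (?F M) N bs = moment_map (?F (Suc ?m)) N bs"
    by (rule moment_map_cong)
  also have "\<dots> = moment_map ((?F (Suc ?m))(?m := (\<lambda>_. 0))) N bs + ?F (Suc ?m) ?m bs"
    using assms(1) by (rule moment_map_top_coeff)
  also have "(?F (Suc ?m))(?m := (\<lambda>_. 0)) = ?F ?m"
    using fitted_coeffs_eq[of t N ?m ?m] by auto
  finally show ?thesis
    by simp
qed

lemma fitted_coeffs_slot_linear_norm_bounded:
  fixes t :: "'b::real_normed_algebra_1 list \<Rightarrow> 'b"
  assumes central: "\<And>c x. cs c * x = x * cs c"
    and t: "\<And>n. n \<le> N \<Longrightarrow> slot_linear cs n t" "\<And>n. n \<le> N \<Longrightarrow> norm_bounded n t"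
  shows "n \<le> N \<Longrightarrow> slot_linear cs n (fitted_coeffs t N M n) \<and> norm_bounded n (fitted_coeffs t N M n)"
proof (induct M arbitrary: n)
  case 0
  then show ?case by (simp add: slot_linear_zero norm_bounded_zero)
next
  case (Suc M)
  then show ?case
    by (auto intro!: slot_linear_diff norm_bounded_diff moment_map_slot_linear[OF central]
        moment_map_norm_bounded t)
qed

lemma fock_moment_fitted_coeffs:
  assumes B: "banach_ncps cs iota E" and "length bs \<le> N" "N < M"
  shows "fock_moment (Xop i N (fitted_coeffs (\<lambda>bs. E (a * alg_word iota a bs)) N M)) (b # bs) =
    E (alg_word iota a (b # bs))"
proof -
  have "fock_moment (Xop i N (fitted_coeffs (\<lambda>bs. E (a * alg_word iota a bs)) N M)) (b # bs) =
      b * E (a * alg_word iota a bs)"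
    using assms(2,3) by (simp add: fock_moment_Cons moment_map_fitted_coeffs)
  also have "\<dots> = E (alg_word iota a (b # bs))"
    by (simp only: alg_word_Cons mult.assoc banach_ncps_E_mult_left[OF B])
  finally show ?thesis .
qed

theorem mainTheorem15:
  fixes cs :: "complex \<Rightarrow> 'b::{real_normed_algebra_1,banach}"
    and iota :: "'b \<Rightarrow> 'a::{real_normed_algebra_1,banach}"
    and E :: "'a \<Rightarrow> 'b"
    and a :: 'a and N :: nat and i :: 'i
  assumes "banach_ncps cs iota E"
    and "N \<ge> 1"
  shows "\<exists>alpha :: nat \<Rightarrow> 'b list \<Rightarrow> 'b.
           (\<forall>n \<le> N. bounded_multilinear_n cs n (alpha n)) \<and>
           (\<forall>k \<in> {1..N}. \<forall>bs :: 'b list. length bs = Suc k \<longrightarrow>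
              fock_moment (Xop i N alpha :: ('i,'b) fop) bs = E (alg_word iota a bs))"
proof -
  define alpha where "alpha = fitted_coeffs (\<lambda>bs. E (a * alg_word iota a bs)) N (Suc N)"
  have "bounded_multilinear_n cs n (alpha n)" if "n \<le> N" for n
    using fitted_coeffs_slot_linear_norm_bounded[OF banach_ncps_scalars_central(1)[OF assms(1)]
        banach_ncps_E_word_slot_linear[OF assms(1)]
        banach_ncps_E_word_norm_bounded[OF assms(1)] that]
    unfolding alpha_def by (blast intro: bounded_multilinear_nI)
  moreover have "fock_moment (Xop i N alpha) bs = E (alg_word iota a bs)"
    if "length bs = Suc k" "k \<le> N" for k bs
  proof -
    obtain b bs' where "bs = b # bs'" "length bs' \<le> N"
      using \<open>length bs = Suc k\<close> \<open>k \<le> N\<close> by (cases bs) auto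
    then show ?thesis
      unfolding alpha_def by (simp only: fock_moment_fitted_coeffs[OF assms(1) _ lessI])
  qed
  ultimately show ?thesis
    by (intro exI[of _ alpha]) auto
qed

end
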